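(* Let $G^1$ be a 1-wconnected 1-graph with infinitely many boundary 1-nodes (not necessarily locally 1-finite). Suppose ${}^{*}G^1$ has a hypernode (of rank 0 or 1) that is not in its principal 1-galaxy $\Gamma_0^1$. Then there exist 1-galaxies $\Gamma_i^1$, $i\in\mathbb Z$, all different from $\Gamma_0^1$, such that for all integers $i<j$ the 1-galaxy $\Gamma_i^1$ is closer to $\Gamma_0^1$ than is $\Gamma_j^1$.
   Context: 1-graphs. A 1-graph $G^1=\{X^0,B,X^1\}$ consists of a graph $G^0=\{X^0,B\}$ (0-nodes, with branches as two-element sets) and 1-nodes. The 1-nodes are obtained by partitioning the 0-tips of $G^0$ (classes of eventually identical one-ended paths) into subsets, some augmented by a single 0-node (each 0-node used at most once). Wdistance. The wdistance $d(x,y)$ is the minimum ordinal length of a two-ended 0-walk or 1-walk terminating at $x$ and $y$. A finite 0-walk has length equal to its number of branch traversals; each 0-tip traversal contributes $\omega$; 1-walk lengths are natural sums. Thus $d<\omega^2$. $\oplus$ denotes the natural sum of ordinals. 1-wconnected: any two nodes are joined by such a walk. A 0-section is the subgraph of $G^0$ induced by a maximal set of pairwise path-connected branches. A boundary 1-node is a 1-node incident to at least two 0-sections. Enlargement. Fix a free ultrafilter $\mathcal F$ on $\mathbb N$. Hypernodes are classes $[x_n]$ of sequences of 0-nodes or of 1-nodes, modulo agreement on a set in $\mathcal F$. A standard hypernode is the class of a constant sequence. 1-galaxies. Hypernodes $[x_n],[y_n]$ are 1-limitedly distant if $\{n:d(x_n,y_n)\le\omega\cdot k\}\in\mathcal F$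 for some $k\in\mathbb N$. 1-galaxies are the equivalence classes of this relation together with the hyperbranches between their 0-hypernodes. The principal 1-galaxy $\Gamma_0^1$ contains the standard hypernodes. Closeness. For 1-galaxies $\Gamma_a^1,\Gamma_b^1\ne\Gamma_0^1$, $\Gamma^1_a$ is closer to $\Gamma_0^1$ than is $\Gamma_b^1$ if there exist $[y_n]\in\Gamma_a^1$, $[z_n]\in\Gamma_b^1$ and $[x_n]\in\Gamma_0^1$ with $\{n: d(z_n,x_n)\ge d(y_n,x_n)\oplus\omega\cdot m\}\in\mathcal F$ for every $m\in\mathbb N$. *)

theory Defs
  imports Main "HOL-Library.Product_Lexorder"
begin

text \<open>An ordinal \<open>\<omega>\<cdot>k + n < \<omega>\<^sup>2\<close> is represented by the pair \<open>(k, n)\<close>;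
  the lexicographic order on pairs (Product_Lexorder) is exactly the ordinal order,
  and the natural sum is componentwise addition.\<close>

type_synonym wlen = "nat \<times> nat"

definition natsum :: "wlen \<Rightarrow> wlen \<Rightarrow> wlen" where
  "natsum a b = (fst a + fst b, snd a + snd b)"

definition omega_times :: "nat \<Rightarrow> wlen" where
  "omega_times k = (k, 0)"

text \<open>A 0-graph is \<open>(X0, B)\<close>: a set of 0-nodes and a set of branches, each branch a
  two-element set of 0-nodes.\<close>

definition path0 :: "'v set set \<Rightarrow> (nat \<Rightarrow> 'v) \<Rightarrow> bool" where
  "path0 B p \<longleftrightarrow> inj p \<and> (\<forall>i. {p i, p (Suc i)} \<in> B)"

definition eventually_identical :: "(nat \<Rightarrow> 'v) \<Rightarrow> (nat \<Rightarrow> 'v) \<Rightarrow> bool" where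
  "eventually_identical p q \<longleftrightarrow> (\<exists>i j. \<forall>k. p (i + k) = q (j + k))"

definition tips0 :: "'v set set \<Rightarrow> (nat \<Rightarrow> 'v) set set" where
  "tips0 B = {{q. path0 B q \<and> eventually_identical p q} | p. path0 B p}"

text \<open>A 1-node is a (nonempty) set of 0-tips, optionally augmented by a single 0-node.\<close>
type_synonym 'v node1 = "(nat \<Rightarrow> 'v) set set \<times> 'v option"

text \<open>Nodes of the 1-graph: 0-nodes (Inl) and 1-nodes (Inr).\<close>
type_synonym 'v gnode = "'v + 'v node1"

definition one_graph :: "'v set \<Rightarrow> 'v set set \<Rightarrow> 'v node1 set \<Rightarrow> bool" where
  "one_graph X0 B X1 \<longleftrightarrow>
     (\<forall>b\<in>B. b \<subseteq> X0 \<and> card b = 2) \<and>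
     (\<forall>u\<in>X1. fst u \<noteq> {} \<and> fst u \<subseteq> tips0 B) \<and>
     (\<Union>u\<in>X1. fst u) = tips0 B \<and>
     (\<forall>u\<in>X1. \<forall>u'\<in>X1. u \<noteq> u' \<longrightarrow> fst u \<inter> fst u' = {}) \<and>
     (\<forall>u\<in>X1. \<forall>v. snd u = Some v \<longrightarrow> v \<in> X0) \<and>
     (\<forall>u\<in>X1. \<forall>u'\<in>X1. \<forall>v. snd u = Some v \<and> snd u' = Some v \<longrightarrow> u = u')"

definition gnodes :: "'v set \<Rightarrow> 'v node1 set \<Rightarrow> 'v gnode set" where
  "gnodes X0 X1 = Inl ` X0 \<union> Inr ` X1"

definition meets :: "'v gnode \<Rightarrow> 'v \<Rightarrow> bool" where
  "meets x v \<longleftrightarrow> x = Inl v \<or> (\<exists>u. x = Inr u \<and> snd u = Some v)"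

definition tip_at :: "'v gnode \<Rightarrow> (nat \<Rightarrow> 'v) set \<Rightarrow> bool" where
  "tip_at x t \<longleftrightarrow> (\<exists>u. x = Inr u \<and> t \<in> fst u)"

definition traverses :: "'v set set \<Rightarrow> (nat \<Rightarrow> 'v) \<Rightarrow> (nat \<Rightarrow> 'v) set \<Rightarrow> bool" where
  "traverses B f t \<longleftrightarrow> (\<forall>i. {f i, f (Suc i)} \<in> B) \<and>
     (\<exists>i. path0 B (\<lambda>k. f (i + k)) \<and> (\<lambda>k. f (i + k)) \<in> t)"

text \<open>A 0-walk segment of a walk from node \<open>x\<close> to node \<open>y\<close>, with its length:
  finite (n branch traversals, length n), one-ended in either direction (length \<omega>),
  or endless (two tips, length \<omega>\<cdot>2).\<close>
definition seg0 :: "'v set set \<Rightarrow> 'v gnode \<Rightarrow> 'v gnode \<Rightarrow> wlen \<Rightarrow> bool" where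
  "seg0 B x y l \<longleftrightarrow>
     (\<exists>f :: nat \<Rightarrow> 'v. \<exists>n. (\<forall>i<n. {f i, f (Suc i)} \<in> B) \<and> meets x (f 0) \<and> meets y (f n)
        \<and> l = (0, n))
   \<or> (\<exists>f t. meets x (f 0) \<and> traverses B f t \<and> tip_at y t \<and> l = (1, 0))
   \<or> (\<exists>f t. meets y (f 0) \<and> traverses B f t \<and> tip_at x t \<and> l = (1, 0))
   \<or> (\<exists>f :: int \<Rightarrow> 'v. \<exists>t1 t2. (\<forall>i. {f i, f (i + 1)} \<in> B) \<and>
        traverses B (\<lambda>k. f (- int k)) t1 \<and> tip_at x t1 \<and>
        traverses B (\<lambda>k. f (int k)) t2 \<and> tip_at y t2 \<and> l = (2, 0))"

definition has_walk :: "'v set \<Rightarrow> 'v set set \<Rightarrow> 'v node1 set \<Rightarrow>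
    'v gnode \<Rightarrow> 'v gnode \<Rightarrow> wlen \<Rightarrow> bool" where
  "has_walk X0 B X1 x y l \<longleftrightarrow> x \<in> gnodes X0 X1 \<and> y \<in> gnodes X0 X1 \<and>
     ((x = y \<and> l = (0, 0)) \<or>
      (\<exists>m :: nat. \<exists>xs :: nat \<Rightarrow> 'v gnode. \<exists>ls :: nat \<Rightarrow> wlen. m \<ge> 1 \<and>
         xs 0 = x \<and> xs m = y \<and> (\<forall>i. 0 < i \<and> i < m \<longrightarrow> xs i \<in> Inr ` X1) \<and>
         (\<forall>i<m. seg0 B (xs i) (xs (Suc i)) (ls i)) \<and>
         l = ((\<Sum>i<m. fst (ls i)), (\<Sum>i<m. snd (ls i)))))"

definition wconnected1 :: "'v set \<Rightarrow> 'v set set \<Rightarrow> 'v node1 set \<Rightarrow> bool" where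
  "wconnected1 X0 B X1 \<longleftrightarrow>
     (\<forall>x\<in>gnodes X0 X1. \<forall>y\<in>gnodes X0 X1. \<exists>l. has_walk X0 B X1 x y l)"

definition wdist :: "'v set \<Rightarrow> 'v set set \<Rightarrow> 'v node1 set \<Rightarrow>
    'v gnode \<Rightarrow> 'v gnode \<Rightarrow> wlen" where
  "wdist X0 B X1 x y = (LEAST l. has_walk X0 B X1 x y l)"

definition branch_conn :: "'v set set \<Rightarrow> 'v set \<Rightarrow> 'v set \<Rightarrow> bool" where
  "branch_conn B b b' \<longleftrightarrow>
     (\<exists>a\<in>b. \<exists>c\<in>b'. (a, c) \<in> {(p, q). {p, q} \<in> B}\<^sup>*)"

text \<open>0-sections, each given by its set of branches (maximal sets of pairwise
  path-connected branches).\<close>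
definition sections0 :: "'v set set \<Rightarrow> 'v set set set" where
  "sections0 B = {{b'\<in>B. branch_conn B b b'} | b. b \<in> B}"

definition incident_section :: "'v node1 \<Rightarrow> 'v set set \<Rightarrow> bool" where
  "incident_section u S \<longleftrightarrow>
     (\<exists>v. snd u = Some v \<and> v \<in> \<Union>S) \<or>
     (\<exists>t\<in>fst u. \<exists>p\<in>t. \<forall>i. {p i, p (Suc i)} \<in> S)"

definition boundary_1node :: "'v set set \<Rightarrow> 'v node1 set \<Rightarrow> 'v node1 \<Rightarrow> bool" where
  "boundary_1node B X1 u \<longleftrightarrow> u \<in> X1 \<and>
     (\<exists>S1\<in>sections0 B. \<exists>S2\<in>sections0 B. S1 \<noteq> S2 \<and>
        incident_section u S1 \<and> incident_section u S2)"

definition free_ultrafilter :: "nat filter \<Rightarrow> bool" where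
  "free_ultrafilter F \<longleftrightarrow> F \<noteq> bot \<and>
     (\<forall>P. eventually P F \<or> eventually (\<lambda>n. \<not> P n) F) \<and>
     (\<forall>k. eventually (\<lambda>n. n \<noteq> k) F)"

text \<open>Representatives of hypernodes: sequences of 0-nodes or sequences of 1-nodes
  (a hypernode is the class of such a sequence modulo agreement on a set in \<open>F\<close>;
  all notions below are invariant under that equivalence).\<close>
definition hyper_seq :: "'v set \<Rightarrow> 'v node1 set \<Rightarrow> (nat \<Rightarrow> 'v gnode) \<Rightarrow> bool" where
  "hyper_seq X0 X1 s \<longleftrightarrow> (\<forall>n. s n \<in> Inl ` X0) \<or> (\<forall>n. s n \<in> Inr ` X1)"

definition limitedly_distant1 :: "nat filter \<Rightarrow> 'v set \<Rightarrow> 'v set set \<Rightarrow> 'v node1 set \<Rightarrow>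
    (nat \<Rightarrow> 'v gnode) \<Rightarrow> (nat \<Rightarrow> 'v gnode) \<Rightarrow> bool" where
  "limitedly_distant1 F X0 B X1 s s' \<longleftrightarrow>
     (\<exists>k::nat. eventually (\<lambda>n. wdist X0 B X1 (s n) (s' n) \<le> omega_times k) F)"

text \<open>A hypernode lies in the principal 1-galaxy iff it is 1-limitedly distant from a
  standard hypernode (class of a constant sequence).\<close>
definition in_principal1 :: "nat filter \<Rightarrow> 'v set \<Rightarrow> 'v set set \<Rightarrow> 'v node1 set \<Rightarrow>
    (nat \<Rightarrow> 'v gnode) \<Rightarrow> bool" where
  "in_principal1 F X0 B X1 s \<longleftrightarrow>
     (\<exists>x\<in>gnodes X0 X1. limitedly_distant1 F X0 B X1 (\<lambda>_. x) s)"

text \<open>1-galaxies are represented by representative hypernodes \<open>a\<close> (the galaxy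
  being the class of hypernodes 1-limitedly distant from \<open>a\<close>).\<close>
definition closer1 :: "nat filter \<Rightarrow> 'v set \<Rightarrow> 'v set set \<Rightarrow> 'v node1 set \<Rightarrow>
    (nat \<Rightarrow> 'v gnode) \<Rightarrow> (nat \<Rightarrow> 'v gnode) \<Rightarrow> bool" where
  "closer1 F X0 B X1 a b \<longleftrightarrow>
     (\<exists>y z x. hyper_seq X0 X1 y \<and> hyper_seq X0 X1 z \<and> hyper_seq X0 X1 x \<and>
        limitedly_distant1 F X0 B X1 a y \<and> limitedly_distant1 F X0 B X1 b z \<and>
        in_principal1 F X0 B X1 x \<and>
        (\<forall>m::nat. eventually (\<lambda>n. natsum (wdist X0 B X1 (y n) (x n)) (omega_times m)
                                     \<le> wdist X0 B X1 (z n) (x n)) F))"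

end

(* Fix a 1-node x0 and a hypernode [s_n] outside the principal 1-galaxy. The omega-coefficient
   K_n of d(x0, s_n) then tends to infinity along F. A minimal walk from x0 to s_n passes through
   1-nodes whose omega-coefficients of distance from x0 hit every value up to K_n within an error
   of 2. Embedding the integers order-preservingly into (0,1) by squash, let g_i(n) be such a
   1-node at omega-distance about squash(i) * K_n. These distances tend to infinity, so no g_i lies
   in the principal 1-galaxy, and for i < j the distances of g_j exceed those of g_i by about
   (squash j - squash i) * K_n, which eventually beats every omega * m.
   Only omega-coefficients of wdistances are compared, and these obey the triangle inequality
   even through 0-nodes. *)

theory Submission
  imports Defs Complex_Main "HOL-Library.Product_Plus"
begin

section \<open>Walks as chains of 0-walk segments\<close>

inductive proper_walk :: "'v set \<Rightarrow> 'v set set \<Rightarrow> 'v node1 set \<Rightarrow>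
    'v gnode \<Rightarrow> 'v gnode \<Rightarrow> wlen \<Rightarrow> bool"
  for X0 B X1 where
  seg: "x \<in> gnodes X0 X1 \<Longrightarrow> y \<in> gnodes X0 X1 \<Longrightarrow> seg0 B x y l \<Longrightarrow> proper_walk X0 B X1 x y l"
| snoc: "proper_walk X0 B X1 x y l \<Longrightarrow> y \<in> Inr ` X1 \<Longrightarrow> z \<in> gnodes X0 X1 \<Longrightarrow> seg0 B y z l'
    \<Longrightarrow> proper_walk X0 B X1 x z (l + l')"

lemma Inr_in_gnodes: "y \<in> Inr ` X1 \<Longrightarrow> y \<in> gnodes X0 X1"
  by (auto simp: gnodes_def)

lemma proper_walk_gnodes: "proper_walk X0 B X1 x y l \<Longrightarrow> x \<in> gnodes X0 X1 \<and> y \<in> gnodes X0 X1"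
  by (induction rule: proper_walk.induct) auto

lemma proper_walk_imp_seq:
  assumes "proper_walk X0 B X1 x y l"
  shows "\<exists>m xs ls. 1 \<le> m \<and> xs 0 = x \<and> xs m = y \<and> (\<forall>i. 0 < i \<and> i < m \<longrightarrow> xs i \<in> Inr ` X1) \<and>
           (\<forall>i<m. seg0 B (xs i) (xs (Suc i)) (ls i)) \<and> l = (\<Sum>i<m. ls i)"
  using assms
proof (induction rule: proper_walk.induct)
  case (seg x y l)
  then show ?case
    by (intro exI[of _ 1] exI[of _ "\<lambda>i. if i = 0 then x else y"] exI[of _ "\<lambda>_. l"]) auto
next
  case (snoc x y l z l')
  then obtain m xs ls where walk: "1 \<le> m" "xs 0 = x" "xs m = y"
    "\<forall>i. 0 < i \<and> i < m \<longrightarrow> xs i \<in> Inr ` X1" "\<forall>i<m. seg0 B (xs i) (xs (Suc i)) (ls i)" "l = (\<Sum>i<m. ls i)"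
    by blast
  show ?case
  proof (intro exI conjI)
    show "(xs(Suc m := z)) 0 = x" using walk(2) by simp
    show "\<forall>i. 0 < i \<and> i < Suc m \<longrightarrow> (xs(Suc m := z)) i \<in> Inr ` X1"
      using walk(3,4) snoc(2) less_Suc_eq by auto
    show "\<forall>i<Suc m. seg0 B ((xs(Suc m := z)) i) ((xs(Suc m := z)) (Suc i)) ((ls(m := l')) i)"
      using walk(3,5) snoc(4) less_Suc_eq by auto
    show "l + l' = (\<Sum>i<Suc m. (ls(m := l')) i)"
      using walk(6) by simp
  qed simp_all
qed

lemma seq_imp_proper_walk:
  assumes "\<forall>i. 0 < i \<and> i < m \<longrightarrow> xs i \<in> Inr ` X1" "\<forall>i<m. seg0 B (xs i) (xs (Suc i)) (ls i)"
    and "xs 0 \<in> gnodes X0 X1" "xs m \<in> gnodes X0 X1" "1 \<le> k" "k \<le> m"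
  shows "proper_walk X0 B X1 (xs 0) (xs k) (\<Sum>i<k. ls i)"
  using assms(5,6)
proof (induction k)
  case (Suc k)
  have "xs (Suc k) \<in> gnodes X0 X1"
    using assms(1,4) Suc.prems Inr_in_gnodes[of "xs (Suc k)" X1 X0] by (cases "Suc k = m") auto
  show ?case
  proof (cases "k = 0")
    case True
    then show ?thesis using assms(2,3) \<open>xs (Suc k) \<in> gnodes X0 X1\<close> Suc.prems by (auto intro: seg)
  next
    case False
    then show ?thesis
      using Suc assms(1,2) \<open>xs (Suc k) \<in> gnodes X0 X1\<close> by (auto intro!: snoc)
  qed
qed simp

lemma has_walk_iff:
  "has_walk X0 B X1 x y l \<longleftrightarrow> x \<in> gnodes X0 X1 \<and> y \<in> gnodes X0 X1 \<and>
     (x = y \<and> l = 0 \<or> proper_walk X0 B X1 x y l)"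
proof -
  have sums: "((\<Sum>i<m. fst (ls i)), (\<Sum>i<m. snd (ls i))) = (\<Sum>i<m. ls i)" for m and ls :: "nat \<Rightarrow> wlen"
    by (simp add: prod_eq_iff fst_sum snd_sum)
  have seq: "(\<exists>m xs ls. 1 \<le> m \<and> xs 0 = x \<and> xs m = y \<and> (\<forall>i. 0 < i \<and> i < m \<longrightarrow> xs i \<in> Inr ` X1) \<and>
           (\<forall>i<m. seg0 B (xs i) (xs (Suc i)) (ls i)) \<and> l = (\<Sum>i<m. ls i))
        \<longleftrightarrow> proper_walk X0 B X1 x y l" if "x \<in> gnodes X0 X1" "y \<in> gnodes X0 X1"
  proof
    assume "\<exists>m xs ls. 1 \<le> m \<and> xs 0 = x \<and> xs m = y \<and> (\<forall>i. 0 < i \<and> i < m \<longrightarrow> xs i \<in> Inr ` X1) \<and>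
           (\<forall>i<m. seg0 B (xs i) (xs (Suc i)) (ls i)) \<and> l = (\<Sum>i<m. ls i)"
    then obtain m xs ls where "1 \<le> m" "xs 0 = x" "xs m = y" "\<forall>i. 0 < i \<and> i < m \<longrightarrow> xs i \<in> Inr ` X1"
        "\<forall>i<m. seg0 B (xs i) (xs (Suc i)) (ls i)" "l = (\<Sum>i<m. ls i)"
      by blast
    then show "proper_walk X0 B X1 x y l"
      using seq_imp_proper_walk[of m xs X1 B ls X0 m] that by simp
  qed (rule proper_walk_imp_seq)
  show ?thesis
    unfolding has_walk_def sums zero_prod_def using seq proper_walk_gnodes by blast
qed

lemma seg0_fst_le: "seg0 B x y l \<Longrightarrow> fst l \<le> 2"
  by (auto simp: seg0_def)

lemma seg0_sym:
  fixes B :: "'v set set"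
  assumes "seg0 B x y l"
  shows "seg0 B y x l"
proof -
  have finite_rev: "\<forall>i<n. {f (n - i), f (n - Suc i)} \<in> B"
    if "\<forall>i<n. {f i, f (Suc i)} \<in> B" for f :: "nat \<Rightarrow> 'v" and n
  proof (intro allI impI)
    fix i assume "i < n"
    then have "{f (n - Suc i), f (Suc (n - Suc i))} \<in> B" using that by simp
    with \<open>i < n\<close> show "{f (n - i), f (n - Suc i)} \<in> B" by (simp add: Suc_diff_Suc insert_commute)
  qed
  have endless_rev: "\<forall>i. {f (- i), f (- (i + 1))} \<in> B"
    if "\<forall>i. {f i, f (i + 1)} \<in> B" for f :: "int \<Rightarrow> 'v"
  proof
    fix i :: int
    have "{f (- i - 1), f (- i - 1 + 1)} \<in> B" using that by blast
    then show "{f (- i), f (- (i + 1))} \<in> B" by (simp add: insert_commute)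
  qed
  from assms[unfolded seg0_def] show ?thesis
  proof (elim disjE exE conjE)
    fix f :: "nat \<Rightarrow> 'v" and n
    assume "\<forall>i<n. {f i, f (Suc i)} \<in> B" "meets x (f 0)" "meets y (f n)" "l = (0, n)"
    then have "\<exists>g n. (\<forall>i<n. {g i, g (Suc i)} \<in> B) \<and> meets y (g 0) \<and> meets x (g n) \<and> l = (0, n)"
      using finite_rev by (intro exI[of _ "\<lambda>i. f (n - i)"] exI[of _ n]) auto
    then show ?thesis unfolding seg0_def by blast
  next
    fix f :: "int \<Rightarrow> 'v" and t1 t2
    assume "\<forall>i. {f i, f (i + 1)} \<in> B" "traverses B (\<lambda>k. f (- int k)) t1" "tip_at x t1"
      "traverses B (\<lambda>k. f (int k)) t2" "tip_at y t2" "l = (2, 0)"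
    then have "\<exists>g t1 t2. (\<forall>i. {g i, g (i + 1)} \<in> B) \<and> traverses B (\<lambda>k. g (- int k)) t1 \<and> tip_at y t1 \<and>
       traverses B (\<lambda>k. g (int k)) t2 \<and> tip_at x t2 \<and> l = (2, 0)"
      using endless_rev by (intro exI[of _ "\<lambda>i. f (- i)"] exI[of _ t2] exI[of _ t1]) auto
    then show ?thesis unfolding seg0_def by blast
  qed (auto simp: seg0_def)
qed

definition append_at :: "nat \<Rightarrow> (nat \<Rightarrow> 'v) \<Rightarrow> (nat \<Rightarrow> 'v) \<Rightarrow> nat \<Rightarrow> 'v" where
  "append_at n f g i = (if i \<le> n then f i else g (i - n))"

lemma append_at_shift: "f n = g 0 \<Longrightarrow> append_at n f g (n + k) = g k"
  by (auto simp: append_at_def)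

lemma append_at_steps:
  assumes "\<forall>i<n. {f i, f (Suc i)} \<in> B" "f n = g 0" "\<forall>i<m. {g i, g (Suc i)} \<in> B"
  shows "\<forall>i<n + m. {append_at n f g i, append_at n f g (Suc i)} \<in> B"
proof (intro allI impI)
  fix i assume "i < n + m"
  show "{append_at n f g i, append_at n f g (Suc i)} \<in> B"
  proof (cases "i < n")
    case True
    then show ?thesis using assms(1) by (auto simp: append_at_def)
  next
    case False
    then obtain k where "i = n + k" "k < m" using \<open>i < n + m\<close> le_Suc_ex by (metis add_less_cancel_left not_less)
    then show ?thesis using assms(2,3) by (simp add: append_at_shift flip: add_Suc_right)
  qed
qed

lemma traverses_append_at:
  assumes "\<forall>i<n. {f i, f (Suc i)} \<in> B" "f n = g 0" "traverses B g t"
  shows "traverses B (append_at n f g) t"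
proof -
  obtain i where "path0 B (\<lambda>k. g (i + k))" "(\<lambda>k. g (i + k)) \<in> t"
    using assms(3) by (auto simp: traverses_def)
  moreover have "(\<lambda>k. append_at n f g (n + i + k)) = (\<lambda>k. g (i + k))"
    using assms(2) by (simp add: append_at_shift add.assoc)
  moreover have "\<forall>j. {append_at n f g j, append_at n f g (Suc j)} \<in> B"
  proof
    fix j
    have "\<forall>i<Suc j. {g i, g (Suc i)} \<in> B" using assms(3) by (simp add: traverses_def)
    then have "\<forall>i<n + Suc j. {append_at n f g i, append_at n f g (Suc i)} \<in> B"
      using append_at_steps assms(1,2) by blast
    then show "{append_at n f g j, append_at n f g (Suc j)} \<in> B" by simp
  qed
  ultimately show ?thesis unfolding traverses_def by metis
qed

lemma seg0_into_0node_cases: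
  assumes "seg0 B u (Inl v) a"
  obtains (finite) f n where "\<forall>i<n. {f i, f (Suc i)} \<in> B" "meets u (f 0)" "f n = v" "a = (0, n)"
  | (one_ended) f t where "f 0 = v" "traverses B f t" "tip_at u t" "a = (1, 0)"
  using assms by (auto simp: seg0_def meets_def tip_at_def)

lemma seg0_from_0node_cases:
  assumes "seg0 B (Inl v) w b"
  obtains (finite) f n where "\<forall>i<n. {f i, f (Suc i)} \<in> B" "f 0 = v" "meets w (f n)" "b = (0, n)"
  | (one_ended) f t where "f 0 = v" "traverses B f t" "tip_at w t" "b = (1, 0)"
  using assms by (auto simp: seg0_def meets_def tip_at_def)

lemma seg0_append_finite:
  assumes "\<forall>i<n. {f i, f (Suc i)} \<in> B" "meets u (f 0)" "f n = v" "seg0 B (Inl v) w b"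
  shows "\<exists>c. seg0 B u w c \<and> fst c = fst b"
  using assms(4)
proof (cases rule: seg0_from_0node_cases)
  case (finite g m)
  then have "\<forall>i<n + m. {append_at n f g i, append_at n f g (Suc i)} \<in> B"
    using append_at_steps assms(1,3) by metis
  moreover have "append_at n f g 0 = f 0" "append_at n f g (n + m) = g m"
    using finite assms(3) append_at_shift[of f n g m] by (auto simp: append_at_def)
  ultimately have "seg0 B u w (0, n + m)"
    unfolding seg0_def using assms(2) finite
    by (intro disjI1 exI[of _ "append_at n f g"] exI[of _ "n + m"]) simp
  then show ?thesis using finite by auto
next
  case (one_ended g t)
  then have "traverses B (append_at n f g) t"
    using traverses_append_at assms(1,3) by metis
  moreover have "append_at n f g 0 = f 0" by (simp add: append_at_def)
  ultimately have "seg0 B u w (1, 0)"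
    unfolding seg0_def using assms(2) one_ended
    by (intro disjI2 disjI1 exI[of _ "append_at n f g"] exI[of _ t]) simp
  then show ?thesis using one_ended by auto
qed

lemma seg0_endless:
  assumes "f 0 = v" "traverses B f t1" "tip_at u t1" "g 0 = v" "traverses B g t2" "tip_at w t2"
  shows "seg0 B u w (2, 0)"
proof -
  define h where "h i = (if 0 \<le> i then g (nat i) else f (nat (- i)))" for i :: int
  have "h (- int k) = f k" for k
    using assms(1,4) by (cases k) (simp_all add: h_def nat_add_distrib)
  moreover have "h (int k) = g k" for k
    by (simp add: h_def)
  moreover have "{h i, h (i + 1)} \<in> B" for i
  proof (cases "0 \<le> i")
    case True
    then have "h i = g (nat i)" "h (i + 1) = g (Suc (nat i))"
      by (simp_all add: h_def nat_add_distrib)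
    then show ?thesis using assms(5) by (simp add: traverses_def)
  next
    case False
    define j where "j = nat (- i - 1)"
    have "i = - int (Suc j)" using False by (simp add: j_def)
    then have "h i = f (Suc j)" "h (i + 1) = f j"
      using assms(1,4) by (simp_all add: h_def nat_add_distrib)
    then show ?thesis using assms(2) by (simp add: traverses_def insert_commute)
  qed
  ultimately show ?thesis
    unfolding seg0_def using assms(2,3,5,6)
    by (intro disjI2 exI[of _ h] exI[of _ t1] exI[of _ t2]) simp
qed

text \<open>A walk meets 0-nodes only inside its segments, so two walks meeting at a 0-node are
  joined by merging the two segments adjacent to it.\<close>

lemma seg0_merge_at_0node:
  fixes B :: "'v set set"
  assumes "seg0 B u (Inl v) a" "seg0 B (Inl v) w b"
  shows "\<exists>c. seg0 B u w c \<and> fst c \<le> fst a + fst b"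
  using assms(1)
proof (cases rule: seg0_into_0node_cases)
  case (finite f n)
  then show ?thesis using seg0_append_finite[OF finite(1-3) assms(2)] by auto
next
  case (one_ended f t)
  from seg0_sym[OF assms(2)] show ?thesis
  proof (cases rule: seg0_into_0node_cases)
    case (finite g m)
    then obtain c where "seg0 B w u c" "fst c = fst a"
      using seg0_append_finite[OF finite(1-3) seg0_sym[OF assms(1)]] by blast
    then show ?thesis using seg0_sym[of B w u c] by (intro exI[of _ c]) simp
  next
    case (one_ended g t')
    then have "seg0 B u w (2, 0)"
      using seg0_endless[of f v B t u g t' w] \<open>f 0 = v\<close> \<open>traverses B f t\<close> \<open>tip_at u t\<close> by blast
    then show ?thesis using \<open>a = (1, 0)\<close> \<open>b = (1, 0)\<close> by auto
  qed
qed

lemma proper_walk_append: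
  "proper_walk X0 B X1 y z b \<Longrightarrow> proper_walk X0 B X1 x y a \<Longrightarrow> y \<in> Inr ` X1 \<Longrightarrow>
   proper_walk X0 B X1 x z (a + b)"
proof (induction rule: proper_walk.induct)
  case (seg y z l)
  then show ?case by (auto intro: snoc)
next
  case (snoc y u l z l')
  then show ?case using proper_walk.snoc[of X0 B X1 x u "a + l" z l'] by (simp add: add.assoc)
qed

lemma proper_walk_sym: "proper_walk X0 B X1 x y l \<Longrightarrow> proper_walk X0 B X1 y x l"
proof (induction rule: proper_walk.induct)
  case (seg x y l)
  then show ?case by (auto intro: proper_walk.seg seg0_sym)
next
  case (snoc x y l z l')
  have "proper_walk X0 B X1 z y l'"
    using snoc proper_walk_gnodes[OF snoc(1)] by (auto intro: proper_walk.seg seg0_sym)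
  from proper_walk_append[OF snoc(5) this snoc(2)] show ?case by (simp add: add.commute)
qed

lemma proper_walk_snoc_seg0:
  assumes "proper_walk X0 B X1 x y a" "seg0 B y z b" "z \<in> gnodes X0 X1"
  shows "\<exists>c. proper_walk X0 B X1 x z c \<and> fst c \<le> fst a + fst b"
proof (cases y)
  case (Inr u)
  then have "y \<in> Inr ` X1" using proper_walk_gnodes[OF assms(1)] by (auto simp: gnodes_def)
  then have "proper_walk X0 B X1 x z (a + b)" using assms by (auto intro: snoc)
  then show ?thesis by (intro exI[of _ "a + b"]) simp
next
  case (Inl v)
  from assms(1) show ?thesis
  proof (cases rule: proper_walk.cases)
    case seg
    then obtain c where "seg0 B x z c" "fst c \<le> fst a + fst b"
      using seg0_merge_at_0node assms(2) Inl by metis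
    then have "proper_walk X0 B X1 x z c" using seg assms(3) by (auto intro: proper_walk.seg)
    then show ?thesis using \<open>fst c \<le> fst a + fst b\<close> by (intro exI[of _ c]) simp
  next
    case (snoc u l l')
    then obtain c where "seg0 B u z c" "fst c \<le> fst l' + fst b"
      using seg0_merge_at_0node assms(2) Inl by metis
    then have "proper_walk X0 B X1 x z (l + c)" using snoc assms(3) by (auto intro: proper_walk.snoc)
    then show ?thesis using \<open>fst c \<le> fst l' + fst b\<close> snoc(1) by (intro exI[of _ "l + c"]) simp
  qed
qed

lemma proper_walk_trans:
  "proper_walk X0 B X1 y z b \<Longrightarrow> proper_walk X0 B X1 x y a \<Longrightarrow>
   \<exists>c. proper_walk X0 B X1 x z c \<and> fst c \<le> fst a + fst b"
proof (induction rule: proper_walk.induct)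
  case (seg y z l)
  then show ?case using proper_walk_snoc_seg0 by blast
next
  case (snoc y u l z l')
  then obtain c where "proper_walk X0 B X1 x u c" "fst c \<le> fst a + fst l" by blast
  then have "proper_walk X0 B X1 x z (c + l')" using snoc by (auto intro: proper_walk.snoc)
  then show ?case using \<open>fst c \<le> fst a + fst l\<close> by (intro exI[of _ "c + l'"]) simp
qed

section \<open>The wdistance\<close>

lemma has_walk_refl: "x \<in> gnodes X0 X1 \<Longrightarrow> has_walk X0 B X1 x x 0"
  by (simp add: has_walk_iff)

lemma has_walk_sym: "has_walk X0 B X1 x y l \<Longrightarrow> has_walk X0 B X1 y x l"
  by (auto simp: has_walk_iff intro: proper_walk_sym)

lemma has_walk_trans:
  assumes "has_walk X0 B X1 x y a" "has_walk X0 B X1 y z b"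
  shows "\<exists>c. has_walk X0 B X1 x z c \<and> fst c \<le> fst a + fst b"
proof -
  have "x \<in> gnodes X0 X1" "z \<in> gnodes X0 X1" using assms by (auto simp: has_walk_iff)
  consider "x = y" "a = 0" | "y = z" "b = 0" | "proper_walk X0 B X1 x y a" "proper_walk X0 B X1 y z b"
    using assms by (auto simp: has_walk_iff)
  then show ?thesis
  proof cases
    case 1
    then show ?thesis using assms(2) by (intro exI[of _ b]) simp
  next
    case 2
    then show ?thesis using assms(1) by (intro exI[of _ a]) simp
  next
    case 3
    then obtain c where "proper_walk X0 B X1 x z c" "fst c \<le> fst a + fst b"
      using proper_walk_trans by blast
    then show ?thesis using \<open>x \<in> gnodes X0 X1\<close> \<open>z \<in> gnodes X0 X1\<close>
      by (intro exI[of _ c]) (simp add: has_walk_iff)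
  qed
qed

lemma has_walk_wdist:
  assumes "wconnected1 X0 B X1" "x \<in> gnodes X0 X1" "y \<in> gnodes X0 X1"
  shows "has_walk X0 B X1 x y (wdist X0 B X1 x y)"
  using assms unfolding wconnected1_def wdist_def by (metis LeastI)

lemma wdist_le: "has_walk X0 B X1 x y l \<Longrightarrow> wdist X0 B X1 x y \<le> l"
  unfolding wdist_def by (rule Least_le)

lemma wdist_self: "x \<in> gnodes X0 X1 \<Longrightarrow> wdist X0 B X1 x x = 0"
  using wdist_le[OF has_walk_refl, of x X0 X1 B]
  by (cases "wdist X0 B X1 x x") (simp add: less_eq_prod_def zero_prod_def)

lemma wdist_commute:
  assumes "wconnected1 X0 B X1" "x \<in> gnodes X0 X1" "y \<in> gnodes X0 X1"
  shows "wdist X0 B X1 x y = wdist X0 B X1 y x"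
  using assms by (metis antisym has_walk_sym has_walk_wdist wdist_le)

abbreviation omega_wdist :: "'v set \<Rightarrow> 'v set set \<Rightarrow> 'v node1 set \<Rightarrow> 'v gnode \<Rightarrow> 'v gnode \<Rightarrow> nat" where
  "omega_wdist X0 B X1 x y \<equiv> fst (wdist X0 B X1 x y)"

lemma omega_wdist_le: "has_walk X0 B X1 x y l \<Longrightarrow> omega_wdist X0 B X1 x y \<le> fst l"
  using wdist_le[of X0 B X1 x y l] by (auto simp: less_eq_prod_def)

lemma omega_wdist_triangle:
  assumes "wconnected1 X0 B X1" "x \<in> gnodes X0 X1" "y \<in> gnodes X0 X1" "z \<in> gnodes X0 X1"
  shows "omega_wdist X0 B X1 x z \<le> omega_wdist X0 B X1 x y + omega_wdist X0 B X1 y z"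
proof -
  obtain c where "has_walk X0 B X1 x z c" "fst c \<le> omega_wdist X0 B X1 x y + omega_wdist X0 B X1 y z"
    using has_walk_trans has_walk_wdist assms by metis
  then show ?thesis using omega_wdist_le order_trans by blast
qed

lemma proper_walk_split:
  "proper_walk X0 B X1 x z l \<Longrightarrow> x \<in> Inr ` X1 \<Longrightarrow> h \<le> fst l \<Longrightarrow>
   \<exists>w\<in>Inr ` X1. \<exists>l1 l2. has_walk X0 B X1 x w l1 \<and> has_walk X0 B X1 w z l2 \<and>
     fst l = fst l1 + fst l2 \<and> h \<le> fst l1 + 2 \<and> fst l1 \<le> h + 2"
proof (induction rule: proper_walk.induct)
  case (seg x y l)
  then have "has_walk X0 B X1 x x 0" "has_walk X0 B X1 x y l"
    using Inr_in_gnodes by (auto simp: has_walk_iff intro: proper_walk.seg)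
  moreover have "h \<le> fst (0::wlen) + 2" using seg seg0_fst_le[OF seg(3)] by simp
  ultimately show ?case using seg(4) by fastforce
next
  case (snoc x y l z l')
  have last: "has_walk X0 B X1 y z l'"
    using snoc Inr_in_gnodes by (auto simp: has_walk_iff intro: proper_walk.seg)
  show ?case
  proof (cases "h \<le> fst l")
    case True
    then obtain w l1 l2 where w: "w \<in> Inr ` X1" "has_walk X0 B X1 x w l1" "has_walk X0 B X1 w y l2"
      "fst l = fst l1 + fst l2" "h \<le> fst l1 + 2" "fst l1 \<le> h + 2"
      using snoc by blast
    have "has_walk X0 B X1 w z (l2 + l')"
    proof (cases "w = y \<and> l2 = 0")
      case True
      then show ?thesis using last by simp
    next
      case False
      then have "proper_walk X0 B X1 w y l2" using w(3) by (auto simp: has_walk_iff)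
      then show ?thesis using snoc(2-4) w(3) by (simp add: has_walk_iff proper_walk.snoc)
    qed
    moreover have "fst l + fst l' = fst l1 + fst (l2 + l')" using w(4) by simp
    ultimately show ?thesis using w(1,2,5,6) by fastforce
  next
    case False
    then have "h \<le> fst l + 2" "fst l \<le> h + 2"
      using snoc.prems seg0_fst_le[OF snoc(4)] by auto
    moreover have "has_walk X0 B X1 x y l" using snoc(1) proper_walk_gnodes[OF snoc(1)] by (simp add: has_walk_iff)
    ultimately show ?thesis using last snoc(2) by fastforce
  qed
qed

lemma has_walk_split:
  assumes "has_walk X0 B X1 x z l" "x \<in> Inr ` X1" "h \<le> fst l"
  shows "\<exists>w\<in>Inr ` X1. \<exists>l1 l2. has_walk X0 B X1 x w l1 \<and> has_walk X0 B X1 w z l2 \<and>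
     fst l = fst l1 + fst l2 \<and> h \<le> fst l1 + 2 \<and> fst l1 \<le> h + 2"
  using assms proper_walk_split[of X0 B X1 x z l h] has_walk_refl[of x X0 X1 B]
  by (fastforce simp: has_walk_iff)

lemma exists_1node_at_omega_wdist:
  assumes "wconnected1 X0 B X1" "x0 \<in> Inr ` X1" "y \<in> gnodes X0 X1"
    and "0 \<le> t" "t \<le> real (omega_wdist X0 B X1 x0 y)"
  shows "\<exists>w\<in>Inr ` X1. \<bar>real (omega_wdist X0 B X1 x0 w) - t\<bar> \<le> 3"
proof -
  have x0: "x0 \<in> gnodes X0 X1" using assms(2) by (rule Inr_in_gnodes)
  have "nat \<lfloor>t\<rfloor> \<le> fst (wdist X0 B X1 x0 y)" using assms(4,5) by linarith
  then obtain w l1 l2 where w: "w \<in> Inr ` X1" "has_walk X0 B X1 x0 w l1" "has_walk X0 B X1 w y l2"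
      "omega_wdist X0 B X1 x0 y = fst l1 + fst l2" "nat \<lfloor>t\<rfloor> \<le> fst l1 + 2" "fst l1 \<le> nat \<lfloor>t\<rfloor> + 2"
    using has_walk_split[OF has_walk_wdist[OF assms(1) x0 assms(3)] assms(2)] by blast
  have "omega_wdist X0 B X1 x0 y \<le> omega_wdist X0 B X1 x0 w + omega_wdist X0 B X1 w y"
    using omega_wdist_triangle assms(1,3) x0 Inr_in_gnodes[OF w(1)] by blast
  \<comment> \<open>the walk to \<open>y\<close> is minimal, hence so is its part up to \<open>w\<close>\<close>
  then have "omega_wdist X0 B X1 x0 w = fst l1"
    using omega_wdist_le[OF w(2)] omega_wdist_le[OF w(3)] w(4) by linarith
  then show ?thesis using w(1,5,6) assms(4) by (intro bexI[of _ w]) linarith+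
qed

section \<open>1-galaxies\<close>

lemma hyper_seq_gnodes: "hyper_seq X0 X1 s \<Longrightarrow> s n \<in> gnodes X0 X1"
  by (auto simp: hyper_seq_def gnodes_def)

lemma hyper_seq_const: "x \<in> gnodes X0 X1 \<Longrightarrow> hyper_seq X0 X1 (\<lambda>_. x)"
  by (auto simp: hyper_seq_def gnodes_def)

lemma limitedly_distant1_refl:
  "(\<And>n. s n \<in> gnodes X0 X1) \<Longrightarrow> limitedly_distant1 F X0 B X1 s s"
  unfolding limitedly_distant1_def omega_times_def by (simp add: wdist_self zero_prod_def)

lemma not_in_principal1_iff:
  assumes "free_ultrafilter F" "wconnected1 X0 B X1" "x0 \<in> gnodes X0 X1" "hyper_seq X0 X1 s"
  shows "\<not> in_principal1 F X0 B X1 s \<longleftrightarrow>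
           filterlim (\<lambda>n. real (omega_wdist X0 B X1 x0 (s n))) at_top F"
proof
  assume "\<not> in_principal1 F X0 B X1 s"
  then have "\<not> eventually (\<lambda>n. wdist X0 B X1 x0 (s n) \<le> omega_times k) F" for k
    using assms(3) unfolding in_principal1_def limitedly_distant1_def by blast
  then have not_near: "eventually (\<lambda>n. \<not> wdist X0 B X1 x0 (s n) \<le> omega_times k) F" for k
    using assms(1) unfolding free_ultrafilter_def by blast
  have far: "eventually (\<lambda>n. k \<le> omega_wdist X0 B X1 x0 (s n)) F" for k
    using not_near[of k]
    by (rule eventually_mono) (auto simp: less_eq_prod_def omega_times_def)
  show "filterlim (\<lambda>n. real (omega_wdist X0 B X1 x0 (s n))) at_top F"
    unfolding filterlim_at_top
  proof
    fix Z :: real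
    show "eventually (\<lambda>n. Z \<le> real (omega_wdist X0 B X1 x0 (s n))) F"
      using far[of "nat \<lceil>Z\<rceil>"] by (rule eventually_mono) linarith
  qed
next
  assume lim: "filterlim (\<lambda>n. real (omega_wdist X0 B X1 x0 (s n))) at_top F"
  show "\<not> in_principal1 F X0 B X1 s"
  proof
    assume "in_principal1 F X0 B X1 s"
    then obtain x k where x: "x \<in> gnodes X0 X1"
      and near: "eventually (\<lambda>n. wdist X0 B X1 x (s n) \<le> omega_times k) F"
      unfolding in_principal1_def limitedly_distant1_def by blast
    have "eventually (\<lambda>n. omega_wdist X0 B X1 x0 (s n) \<le> omega_wdist X0 B X1 x0 x + k) F"
      using near
    proof (rule eventually_mono)
      fix n assume "wdist X0 B X1 x (s n) \<le> omega_times k"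
      then have "omega_wdist X0 B X1 x (s n) \<le> k" by (auto simp: less_eq_prod_def omega_times_def)
      then show "omega_wdist X0 B X1 x0 (s n) \<le> omega_wdist X0 B X1 x0 x + k"
        using omega_wdist_triangle[OF assms(2,3) x hyper_seq_gnodes[OF assms(4), of n]] by linarith
    qed
    moreover have "eventually (\<lambda>n. real (omega_wdist X0 B X1 x0 x + k) + 1 \<le> real (omega_wdist X0 B X1 x0 (s n))) F"
      using lim unfolding filterlim_at_top by blast
    ultimately have "eventually (\<lambda>_. False) F"
      by (rule eventually_elim2) linarith
    then show False using assms(1) by (simp add: free_ultrafilter_def)
  qed
qed

lemma closer1_if_omega_wdist_gap:
  assumes "wconnected1 X0 B X1" "x0 \<in> gnodes X0 X1" "hyper_seq X0 X1 a" "hyper_seq X0 X1 b"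
    and "filterlim (\<lambda>n. real (omega_wdist X0 B X1 x0 (b n)) - real (omega_wdist X0 B X1 x0 (a n))) at_top F"
  shows "closer1 F X0 B X1 a b"
proof -
  have "eventually (\<lambda>n. natsum (wdist X0 B X1 (a n) x0) (omega_times m) \<le> wdist X0 B X1 (b n) x0) F" for m
  proof -
    have "eventually (\<lambda>n. real m + 1 \<le> real (omega_wdist X0 B X1 x0 (b n)) - real (omega_wdist X0 B X1 x0 (a n))) F"
      using assms(5) unfolding filterlim_at_top by blast
    then show ?thesis
    proof (rule eventually_mono)
      fix n
      assume "real m + 1 \<le> real (omega_wdist X0 B X1 x0 (b n)) - real (omega_wdist X0 B X1 x0 (a n))"
      moreover have "omega_wdist X0 B X1 x0 (a n) = omega_wdist X0 B X1 (a n) x0"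
          "omega_wdist X0 B X1 x0 (b n) = omega_wdist X0 B X1 (b n) x0"
        using wdist_commute assms(1,2) hyper_seq_gnodes assms(3,4) by metis+
      ultimately have "omega_wdist X0 B X1 (a n) x0 + m < omega_wdist X0 B X1 (b n) x0" by linarith
      then show "natsum (wdist X0 B X1 (a n) x0) (omega_times m) \<le> wdist X0 B X1 (b n) x0"
        by (auto simp: less_eq_prod_def natsum_def omega_times_def)
    qed
  qed
  moreover have "in_principal1 F X0 B X1 (\<lambda>_. x0)"
    unfolding in_principal1_def using assms(2) limitedly_distant1_refl[of "\<lambda>_. x0"] by blast
  moreover have "limitedly_distant1 F X0 B X1 a a" "limitedly_distant1 F X0 B X1 b b"
    using limitedly_distant1_refl hyper_seq_gnodes assms(3,4) by metis+
  ultimately show ?thesis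
    unfolding closer1_def using assms(3,4) hyper_seq_const[OF assms(2)]
    by (intro exI[of _ a] exI[of _ b] exI[of _ "\<lambda>_. x0"]) simp
qed

lemma filterlim_at_top_linear_minorant:
  fixes K f :: "'a \<Rightarrow> real"
  assumes "filterlim K at_top F" "0 < c" "\<And>x. c * K x - r \<le> f x"
  shows "filterlim f at_top F"
proof (rule filterlim_at_top_mono)
  have "filterlim (\<lambda>x. c * K x) at_top F"
    using filterlim_tendsto_pos_mult_at_top[OF tendsto_const assms(2,1)] .
  then have "filterlim (\<lambda>x. - r + c * K x) at_top F"
    by (rule filterlim_tendsto_add_at_top[OF tendsto_const])
  then show "filterlim (\<lambda>x. c * K x - r) at_top F" by simp
qed (use assms(3) in simp)

definition squash :: "int \<Rightarrow> real" where
  "squash i = 1/2 + arctan (real_of_int i) / pi"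

lemma squash_gt_0: "0 < squash i"
  using arctan_bounded[of "real_of_int i"] pi_gt_zero by (simp add: squash_def field_simps)

lemma squash_less_1: "squash i < 1"
  using arctan_bounded[of "real_of_int i"] pi_gt_zero by (simp add: squash_def field_simps)

lemma squash_strict_mono: "strict_mono squash"
  by (rule strict_monoI) (simp add: squash_def divide_strict_right_mono arctan_less_iff)

lemma squash_fraction_1nodes:
  assumes "wconnected1 X0 B X1" "x0 \<in> Inr ` X1" "hyper_seq X0 X1 s"
  obtains g where "\<And>i n. g i n \<in> Inr ` X1"
    "\<And>i n. \<bar>real (omega_wdist X0 B X1 x0 (g i n)) - squash i * real (omega_wdist X0 B X1 x0 (s n))\<bar> \<le> 3"
proof -
  have "\<exists>w\<in>Inr ` X1. \<bar>real (omega_wdist X0 B X1 x0 w) - squash i * real (omega_wdist X0 B X1 x0 (s n))\<bar> \<le> 3"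
    for i n
  proof (rule exists_1node_at_omega_wdist[OF assms(1,2) hyper_seq_gnodes[OF assms(3)]])
    show "0 \<le> squash i * real (omega_wdist X0 B X1 x0 (s n))"
      using squash_gt_0[of i] by simp
    show "squash i * real (omega_wdist X0 B X1 x0 (s n)) \<le> real (omega_wdist X0 B X1 x0 (s n))"
      using squash_gt_0[of i] squash_less_1[of i] by (simp add: mult_left_le_one_le)
  qed
  then show ?thesis using that by metis
qed

lemma squash_fraction_galaxies:
  assumes "free_ultrafilter F" "wconnected1 X0 B X1" "x0 \<in> gnodes X0 X1" "filterlim K at_top F"
    and hyper: "\<And>i. hyper_seq X0 X1 (g i)"
    and near: "\<And>i n. \<bar>real (omega_wdist X0 B X1 x0 (g i n)) - squash i * K n\<bar> \<le> 3"
  shows "\<not> in_principal1 F X0 B X1 (g i)"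
    and "i < j \<Longrightarrow> closer1 F X0 B X1 (g i) (g j)"
proof -
  have "filterlim (\<lambda>n. real (omega_wdist X0 B X1 x0 (g i n))) at_top F"
  proof (rule filterlim_at_top_linear_minorant[OF assms(4) squash_gt_0])
    show "squash i * K n - 3 \<le> real (omega_wdist X0 B X1 x0 (g i n))" for n
      using near[of i n] by linarith
  qed
  then show "\<not> in_principal1 F X0 B X1 (g i)"
    using not_in_principal1_iff[OF assms(1-3) hyper] by blast
next
  assume "i < j"
  then have "0 < squash j - squash i" using squash_strict_mono by (simp add: strict_mono_less)
  then have "filterlim (\<lambda>n. real (omega_wdist X0 B X1 x0 (g j n))
      - real (omega_wdist X0 B X1 x0 (g i n))) at_top F"
  proof (rule filterlim_at_top_linear_minorant[OF assms(4)])
    show "(squash j - squash i) * K n - 6 \<le> real (omega_wdist X0 B X1 x0 (g j n))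
        - real (omega_wdist X0 B X1 x0 (g i n))" for n
      using near[of i n] near[of j n] by (simp add: left_diff_distrib abs_le_iff)
  qed
  then show "closer1 F X0 B X1 (g i) (g j)"
    using closer1_if_omega_wdist_gap[OF assms(2,3) hyper hyper] by blast
qed

theorem theorem11p2:
  fixes X0 :: "'v set" and B :: "'v set set" and X1 :: "'v node1 set"
    and F :: "nat filter"
  assumes "free_ultrafilter F"
    and "one_graph X0 B X1"
    and "wconnected1 X0 B X1"
    and "infinite {u. boundary_1node B X1 u}"
    and "\<exists>s. hyper_seq X0 X1 s \<and> \<not> in_principal1 F X0 B X1 s"
  shows "\<exists>g :: int \<Rightarrow> nat \<Rightarrow> 'v gnode.
           (\<forall>i. hyper_seq X0 X1 (g i) \<and> \<not> in_principal1 F X0 B X1 (g i)) \<and>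
           (\<forall>i j. i < j \<longrightarrow> closer1 F X0 B X1 (g i) (g j))"
proof -
  obtain u0 where "boundary_1node B X1 u0" using infinite_imp_nonempty[OF assms(4)] by blast
  then have x0: "Inr u0 \<in> Inr ` X1" by (simp add: boundary_1node_def)
  then have x0_gnode: "Inr u0 \<in> gnodes X0 X1" by (rule Inr_in_gnodes)
  obtain s where s: "hyper_seq X0 X1 s" "\<not> in_principal1 F X0 B X1 s" using assms(5) by blast
  define K where "K n = real (omega_wdist X0 B X1 (Inr u0) (s n))" for n
  have K: "filterlim K at_top F"
    using s not_in_principal1_iff[OF assms(1,3) x0_gnode] unfolding K_def by blast
  obtain g where g: "\<And>i n. g i n \<in> Inr ` X1"
    and near: "\<And>i n. \<bar>real (omega_wdist X0 B X1 (Inr u0) (g i n)) - squash i * K n\<bar> \<le> 3"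
    using squash_fraction_1nodes[OF assms(3) x0 s(1)] unfolding K_def by metis
  have hyper: "hyper_seq X0 X1 (g i)" for i
    using g by (simp add: hyper_seq_def)
  show ?thesis
    using hyper squash_fraction_galaxies[OF assms(1,3) x0_gnode K hyper near] by blast
qed

end
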